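(* Let $h_{SR_k}, h_{R_kD}, h_{SP}, h_{R_kP}, h_{R_kR_k} \in \mathbb{C}$, $\sigma_D > 0$, $\sigma_{R_k} > 0$, $\zeta \ge 0$, and set $\hat{\zeta} = |h_{R_kR_k}|^2\zeta$, assumed $>0$. Let $\bar{\mathcal{I}}_P > 0$, $P_S^{\max} > 0$, $P_{R_k}^{\max} > 0$. For $p_S, p_{R_k} \ge 0$ define $$G_k = \left[p_S^2|h_{SR_k}|^2 + \zeta p_{R_k}^2|h_{R_kR_k}|^2 + \sigma_{R_k}^2\right]^{-1/2},$$ $$A = h_{SP}\,p_S + h_{R_kP}\sqrt{\zeta}\,p_{R_k},\qquad B = \left(h_{SR_k}p_S + h_{R_kR_k}\sqrt{\zeta}\,p_{R_k} + \frac{\sigma_{R_k}}{\sqrt 2}(1+j)\right)G_k\,h_{R_kP}\,p_{R_k},$$ and $\mathcal{I}^{\mathrm{coh}}_k = (|A| - |B|)^2$. Consider the optimization problem (Problem 4) $$\max_{p_S, p_{R_k}} \ \breve{\mathcal{C}}_k(p_S, p_{R_k}) = \frac{\frac{p_{R_k}^2|h_{R_kD}|^2}{\sigma_D^2}\cdot\frac{p_S^2|h_{SR_k}|^2}{\hat{\zeta}p_{R_k}^2}}{1 + \frac{p_{R_k}^2|h_{R_kD}|^2}{\sigma_D^2} + \frac{p_S^2|h_{SR_k}|^2}{\hat{\zeta}p_{R_k}^2}}$$ subject to $$\mathcal{I}^{\mathrm{coh}}_k \le \bar{\mathcal{I}}_P,\quad 0 \le p_S \le \sqrt{P_S^{\max}},\quad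 0 \le p_{R_k} \le \sqrt{P_{R_k}^{\max}}.$$ Then Problem 4 is not a convex optimization problem in the joint variable $(p_S, p_{R_k})$.
   Context: $j$ is the imaginary unit. A maximization problem is called a convex optimization problem if its objective is a concave function over a convex feasible set. The objective is defined for $p_{R_k} > 0$. The variables $p_S = \sqrt{P_S}$, $p_{R_k} = \sqrt{P_{R_k}}$ are square roots of the transmit powers, and $\mathcal{I}^{\mathrm{coh}}_k$ is the interference at the primary receiver in the coherent scenario after optimal phase regulation at the relay. *)

theory Defs
  imports "HOL-Analysis.Analysis"
begin

definition G_k :: "complex \<Rightarrow> complex \<Rightarrow> real \<Rightarrow> real \<Rightarrow> real \<Rightarrow> real \<Rightarrow> real" where
  "G_k hSR hRR \<zeta> \<sigma>R pS pR =
     1 / sqrt (pS^2 * (cmod hSR)^2 + \<zeta> * pR^2 * (cmod hRR)^2 + \<sigma>R^2)"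

definition I_coh :: "complex \<Rightarrow> complex \<Rightarrow> complex \<Rightarrow> complex \<Rightarrow> real \<Rightarrow> real \<Rightarrow> real \<Rightarrow> real \<Rightarrow> real" where
  "I_coh hSR hRR hSP hRP \<zeta> \<sigma>R pS pR =
     (let A = hSP * complex_of_real pS + hRP * complex_of_real (sqrt \<zeta>) * complex_of_real pR;
          B = (hSR * complex_of_real pS + hRR * complex_of_real (sqrt \<zeta>) * complex_of_real pR
                + complex_of_real (\<sigma>R / sqrt 2) * (1 + \<i>))
              * complex_of_real (G_k hSR hRR \<zeta> \<sigma>R pS pR) * hRP * complex_of_real pR
      in (cmod A - cmod B)^2)"

definition C_breve :: "complex \<Rightarrow> complex \<Rightarrow> complex \<Rightarrow> real \<Rightarrow> real \<Rightarrow> real \<Rightarrow> real \<Rightarrow> real" where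
  "C_breve hSR hRD hRR \<zeta> \<sigma>D pS pR =
     (let \<zeta>h = (cmod hRR)^2 * \<zeta>;
          x = pR^2 * (cmod hRD)^2 / \<sigma>D^2;
          y = pS^2 * (cmod hSR)^2 / (\<zeta>h * pR^2)
      in x * y / (1 + x + y))"

text \<open>Feasible set of Problem 4 (restricted to the domain pR > 0 of the objective).\<close>
definition feasible4 :: "complex \<Rightarrow> complex \<Rightarrow> complex \<Rightarrow> complex \<Rightarrow> real \<Rightarrow> real \<Rightarrow> real \<Rightarrow> real \<Rightarrow> real \<Rightarrow> (real \<times> real) set" where
  "feasible4 hSR hRR hSP hRP \<zeta> \<sigma>R IP PSmax PRmax =
     {(pS, pR). 0 < pR \<and> I_coh hSR hRR hSP hRP \<zeta> \<sigma>R pS pR \<le> IP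
        \<and> 0 \<le> pS \<and> pS \<le> sqrt PSmax \<and> 0 \<le> pR \<and> pR \<le> sqrt PRmax}"

definition convex_max_problem :: "('a::real_vector) set \<Rightarrow> ('a \<Rightarrow> real) \<Rightarrow> bool" where
  "convex_max_problem F f \<longleftrightarrow> convex F \<and> concave_on F f"

end

theory Submission
  imports Defs
begin

(* Along a horizontal segment pR = t the objective is x y / (1 + x + y) with y proportional to
   pS^2. For small y this behaves like a multiple of pS^2, which is strictly convex, so halving pS
   more than halves the objective. Such segments are feasible for small t, because the interference
   vanishes at the origin and is continuous there. *)

lemma I_coh_ray_tendsto_0:
  assumes "\<sigma>R > 0"
  shows "((\<lambda>t. I_coh hSR hRR hSP hRP \<zeta> \<sigma>R (c * t) t) \<longlongrightarrow> 0) (at_right 0)"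
proof -
  let ?I = "\<lambda>t. I_coh hSR hRR hSP hRP \<zeta> \<sigma>R (c * t) t"
  have "isCont ?I 0"
    unfolding I_coh_def G_k_def Let_def using assms by (intro continuous_intros) auto
  then have "(?I \<longlongrightarrow> ?I 0) (at 0)"
    by (rule isContD)
  moreover have "?I 0 = 0"
    by (simp add: I_coh_def Let_def)
  ultimately have "(?I \<longlongrightarrow> 0) (at 0)"
    by simp
  then show ?thesis
    by (rule tendsto_mono[OF at_le, rotated]) simp
qed

lemma eventually_ray_in_feasible4:
  assumes "\<sigma>R > 0" "IP > 0" "PSmax > 0" "PRmax > 0" "c \<ge> 0"
  shows "\<forall>\<^sub>F t in at_right 0. (c * t, t) \<in> feasible4 hSR hRR hSP hRP \<zeta> \<sigma>R IP PSmax PRmax"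
proof -
  have "\<forall>\<^sub>F t in at_right 0. I_coh hSR hRR hSP hRP \<zeta> \<sigma>R (c * t) t < IP"
    using order_tendstoD(2)[OF I_coh_ray_tendsto_0 \<open>IP > 0\<close>] assms(1) by blast
  moreover have "\<forall>\<^sub>F t in at_right 0. c * t < sqrt PSmax"
    using assms(3) by (intro order_tendstoD(2)) (auto intro!: tendsto_eq_intros)
  moreover have "\<forall>\<^sub>F t in at_right 0. t < sqrt PRmax"
    using assms(4) by (intro order_tendstoD(2)[OF tendsto_ident_at]) auto
  moreover have "\<forall>\<^sub>F t in at_right (0::real). t > 0"
    by (rule eventually_at_right_less)
  ultimately show ?thesis
    by eventually_elim (use assms(5) in \<open>auto simp: feasible4_def\<close>)
qed

lemma C_breve_pS_zero: "C_breve hSR hRD hRR \<zeta> \<sigma>D 0 pR = 0"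
  by (simp add: C_breve_def Let_def)

lemma C_breve_halve_pS_less:
  assumes "\<sigma>D > 0" "(cmod hRR)^2 * \<zeta> > 0" "hSR \<noteq> 0" "hRD \<noteq> 0" "pS > 0" "pR > 0"
    and small: "pS^2 * (cmod hSR)^2 \<le> 2 * ((cmod hRR)^2 * \<zeta> * pR^2)"
  shows "2 * C_breve hSR hRD hRR \<zeta> \<sigma>D (pS / 2) pR < C_breve hSR hRD hRR \<zeta> \<sigma>D pS pR"
proof -
  define x where "x = pR^2 * (cmod hRD)^2 / \<sigma>D^2"
  define y where "y = pS^2 * (cmod hSR)^2 / ((cmod hRR)^2 * \<zeta> * pR^2)"
  have "x > 0" "y > 0"
    using assms unfolding x_def y_def by auto
  have "y \<le> 2"
    using small assms(2,6) unfolding y_def by (simp add: divide_le_eq)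
  have "C_breve hSR hRD hRR \<zeta> \<sigma>D pS pR = x * y / (1 + x + y)"
    unfolding C_breve_def Let_def x_def y_def ..
  moreover have "C_breve hSR hRD hRR \<zeta> \<sigma>D (pS / 2) pR = x * (y / 4) / (1 + x + y / 4)"
    unfolding C_breve_def Let_def x_def y_def by (simp add: power_divide)
  moreover have "2 * (x * (y / 4) / (1 + x + y / 4)) < x * y / (1 + x + y)"
  proof -
    \<comment> \<open>after clearing denominators this is y < 2 (1 + x)\<close>
    have "x * y * (1 + x + y) < x * y * (2 + 2 * x + y / 2)"
      using \<open>x > 0\<close> \<open>y > 0\<close> \<open>y \<le> 2\<close> by (intro mult_strict_left_mono) auto
    then show ?thesis
      using \<open>x > 0\<close> \<open>y > 0\<close> by (simp add: field_simps)
  qed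
  ultimately show ?thesis
    by simp
qed

theorem lemma4:
  fixes hSR hRD hSP hRP hRR :: complex
    and \<sigma>D \<sigma>R \<zeta> IP PSmax PRmax :: real
  assumes "\<sigma>D > 0" "\<sigma>R > 0" "\<zeta> \<ge> 0" "(cmod hRR)^2 * \<zeta> > 0"
    and "IP > 0" "PSmax > 0" "PRmax > 0"
    and "hSR \<noteq> 0" "hRD \<noteq> 0"
  shows "\<not> convex_max_problem (feasible4 hSR hRR hSP hRP \<zeta> \<sigma>R IP PSmax PRmax)
            (\<lambda>(pS, pR). C_breve hSR hRD hRR \<zeta> \<sigma>D pS pR)"
proof
  let ?F = "feasible4 hSR hRR hSP hRP \<zeta> \<sigma>R IP PSmax PRmax"
  let ?C = "C_breve hSR hRD hRR \<zeta> \<sigma>D"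
  assume "convex_max_problem ?F (\<lambda>(pS, pR). ?C pS pR)"
  then have concave: "concave_on ?F (\<lambda>(pS, pR). ?C pS pR)"
    unfolding convex_max_problem_def by simp
  \<comment> \<open>on the ray pS = c pR the quantity y of the objective equals 1\<close>
  define c where "c = sqrt ((cmod hRR)^2 * \<zeta>) / cmod hSR"
  have "c > 0"
    using assms(4,8) unfolding c_def by simp
  have "\<forall>\<^sub>F t in at_right 0. (0 * t, t) \<in> ?F \<and> (c * t, t) \<in> ?F"
    using assms \<open>c > 0\<close> by (intro eventually_conj eventually_ray_in_feasible4) auto
  then obtain t where feasible: "(0, t) \<in> ?F" "(c * t, t) \<in> ?F"
    using eventually_happens'[of "at_right (0::real)"] by auto
  then have "t > 0"
    by (simp add: feasible4_def)
  have "(c * t)^2 * (cmod hSR)^2 = (cmod hRR)^2 * \<zeta> * t^2"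
    using assms(4,8) unfolding c_def by (simp add: power_mult_distrib power_divide)
  then have "2 * ?C (c * t / 2) t < ?C (c * t) t"
    using assms \<open>c > 0\<close> \<open>t > 0\<close> by (intro C_breve_halve_pS_less) auto
  moreover have "(1 - 1/2) * ?C 0 t + 1/2 * ?C (c * t) t \<le> ?C (c * t / 2) t"
    using concave_onD[OF concave, of "1/2", OF _ _ feasible] by simp
  ultimately show False
    by (simp add: C_breve_pS_zero)
qed

end
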